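(* Let $q\geq 3$ and $n\ge 2$. The graph with vertex set $\mathcal{HGL}_n(\mathbb{F}_{q^2})$, in which $A,B$ are joined by an edge iff $\operatorname{rank}(A-B)=1$, is connected.
   Context: $\mathbb{F}_{q^2}$ is the field with $q^2$ elements with involution $\bar x=x^q$; $X^\ast=\bar X^\top$; $A$ is hermitian if $A^\ast=A$; $\mathcal{HGL}_n(\mathbb{F}_{q^2})$ is the set of invertible $n\times n$ hermitian matrices over $\mathbb{F}_{q^2}$. *)

theory Defs
  imports "Jordan_Normal_Form.DL_Rank"
begin

text \<open>The involution of F_{q^2}: conjugation x maps to x^q.\<close>
definition qbar :: "nat \<Rightarrow> 'a::field \<Rightarrow> 'a" where
  "qbar q x = x ^ q"

definition conj_transpose :: "nat \<Rightarrow> 'a::field mat \<Rightarrow> 'a mat" where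
  "conj_transpose q A = transpose_mat (map_mat (qbar q) A)"

definition hermitian_mat :: "nat \<Rightarrow> 'a::field mat \<Rightarrow> bool" where
  "hermitian_mat q A \<longleftrightarrow> conj_transpose q A = A"

definition HGL :: "nat \<Rightarrow> nat \<Rightarrow> 'a::field mat set" where
  "HGL q n = {A. A \<in> carrier_mat n n \<and> hermitian_mat q A \<and> invertible_mat A}"

definition HGL_adj :: "nat \<Rightarrow> nat \<Rightarrow> 'a::field mat \<Rightarrow> 'a mat \<Rightarrow> bool" where
  "HGL_adj q n A B \<longleftrightarrow> A \<in> HGL q n \<and> B \<in> HGL q n \<and> vec_space.rank n (A - B) = 1"

end

theory Submission
  imports
    Defs
    "HOL-Computational_Algebra.Primes"
    "HOL-Number_Theory.Cong"
    "Jordan_Normal_Form.DL_Rank_Submatrix"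
begin

(* Write the hermitian matrix B - A as a sum of rank-one hermitian matrices c f f* with c in F_q
   (first killing the diagonal entries with f a unit vector, then each off-diagonal pair with
   f = e_i + H_ji e_j). One such term is peeled off by choosing d in F_q such that A + d f f* and
   B + (d - c) f f* are both invertible: these two matrices are at rank distance at most one from
   A and B, and their difference is the remaining sum. By the matrix determinant lemma each
   determinant vanishes for at most one value of d, so the q >= 3 elements of F_q suffice.
   That F_q, the fixed field of x |-> x^q, is that large, and that x |-> x^q is additive, both rest
   on |F| = q^2 being a power of the characteristic. *)

section \<open>Finite fields\<close>

lemma power_card_eq_self:
  fixes x :: "'a::{finite,field}"
  shows "x ^ card (UNIV :: 'a set) = x"
proof (cases "x = 0")
  case False
  have "x * (\<Prod>y\<in>UNIV-{0}. x * y) = x * x ^ (card (UNIV :: 'a set) - 1) * \<Prod>(UNIV-{0})"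
    by (simp add: prod.distrib mult_ac)
  also have "x * x ^ (card (UNIV :: 'a set) - 1) = x ^ card (UNIV :: 'a set)"
    using finite_UNIV_card_ge_0[where ?'a = 'a] by (simp flip: power_Suc)
  also have "(\<Prod>y\<in>UNIV-{0}. x * y) = (\<Prod>y\<in>UNIV-{0}. y)"
    by (rule prod.reindex_bij_witness[of _ "\<lambda>y. y / x" "\<lambda>y. x * y"]) (use False in auto)
  finally show ?thesis
    by simp
qed (use finite_UNIV_card_ge_0[where ?'a = 'a] in auto)

lemma inverse_eq_power_card_minus_2:
  fixes a :: "'a::{finite,field}"
  assumes "a \<noteq> 0"
  shows "inverse a = a ^ (card (UNIV :: 'a set) - 2)"
proof (rule inverse_unique)
  let ?N = "card (UNIV :: 'a set)"
  have "card {0, 1::'a} \<le> ?N"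
    by (rule card_mono) auto
  then have "?N = Suc (Suc (?N - 2))"
    by simp
  then have "a * (a * a ^ (?N - 2)) = a * 1"
    using power_card_eq_self[of a] by (metis power_Suc mult_1_right)
  then show "a * a ^ (?N - 2) = 1"
    using assms by simp
qed

definition add_closed :: "'a::monoid_add set \<Rightarrow> bool" where
  "add_closed S \<longleftrightarrow> 0 \<in> S \<and> (\<forall>x\<in>S. \<forall>y\<in>S. x + y \<in> S)"

lemma add_closed_of_nat_mult:
  fixes S :: "'a::semiring_1 set"
  assumes "add_closed S" "t \<in> S"
  shows "of_nat m * t \<in> S"
  using assms by (induction m) (auto simp: add_closed_def distrib_right)

lemma add_closed_diff:
  fixes S :: "'a::{finite,ring_1} set"
  assumes S: "add_closed S" and "s \<in> S" "t \<in> S"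
  shows "s - t \<in> S"
proof -
  have "CHAR('a) > 0"
    by (simp add: finite_imp_CHAR_pos)
  then have "- t = of_nat (CHAR('a) - 1) * t"
    by (simp add: of_nat_diff)
  then have "- t \<in> S"
    using add_closed_of_nat_mult[OF S \<open>t \<in> S\<close>] by metis
  then show ?thesis
    using S \<open>s \<in> S\<close> by (metis add_closed_def diff_conv_add_uminus)
qed

lemma add_closed_of_nat_mult_cancel:
  fixes S :: "'a::{finite,field} set"
  assumes "add_closed S" "of_nat k * x \<in> S" "(of_nat k :: 'a) \<noteq> 0"
  shows "x \<in> S"
proof -
  have "x = inverse (of_nat k) * (of_nat k * x)"
    using assms(3) by (simp add: mult.assoc[symmetric])
  also have "\<dots> = of_nat (k ^ (card (UNIV :: 'a set) - 2)) * (of_nat k * x)"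
    using inverse_eq_power_card_minus_2[OF assms(3)] by simp
  finally show ?thesis
    using add_closed_of_nat_mult[OF assms(1,2)] by metis
qed

lemma add_closed_extend:
  fixes S :: "'a::{finite,field} set"
  assumes S: "add_closed S" and x: "x \<notin> S"
  defines "S' \<equiv> (\<lambda>(s, i). s + of_nat i * x) ` (S \<times> {..<CHAR('a)})"
  shows "add_closed S'" "S \<subset> S'" "card S' = CHAR('a) * card S"
proof -
  let ?p = "CHAR('a)"
  have p: "?p > 0"
    by (simp add: finite_imp_CHAR_pos)
  have of_nat_mod: "(of_nat (k mod ?p) :: 'a) = of_nat k" for k
    by (simp add: of_nat_eq_iff_cong_CHAR cong_def)
  show "add_closed S'"
    unfolding add_closed_def
  proof (intro conjI ballI)
    show "0 \<in> S'"
      unfolding S'_def using S p by (auto simp: add_closed_def intro!: image_eqI[of _ _ "(0, 0)"])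
    fix u w assume "u \<in> S'" "w \<in> S'"
    then obtain s i t j where "s \<in> S" "t \<in> S" and u: "u = s + of_nat i * x" and w: "w = t + of_nat j * x"
      unfolding S'_def by auto
    then have "u + w = (s + t) + of_nat ((i + j) mod ?p) * x" "s + t \<in> S"
      using S of_nat_mod[of "i + j"] by (auto simp: add_closed_def algebra_simps)
    then show "u + w \<in> S'"
      unfolding S'_def using p by (auto intro!: image_eqI[of _ _ "(s + t, (i + j) mod ?p)"])
  qed
  have "S \<subseteq> S'"
    unfolding S'_def using p by (force intro!: image_eqI[of _ _ "(s, 0)" for s])
  moreover have "x \<in> S'"
    unfolding S'_def using S prime_ge_2_nat[OF prime_CHAR_semidom[OF p]]
    by (force simp: add_closed_def intro!: image_eqI[of _ _ "(0, 1)"])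
  ultimately show "S \<subset> S'"
    using x by blast
  have no_collision: "i = j"
    if "s \<in> S" "t \<in> S" "i \<le> j" "j < ?p" "s + of_nat i * x = t + of_nat j * x" for s t i j
  proof (rule ccontr)
    assume "i \<noteq> j"
    then have "0 < j - i" "j - i < ?p"
      using that(3,4) by auto
    then have "(of_nat (j - i) :: 'a) \<noteq> 0"
      unfolding of_nat_eq_0_iff_char_dvd using nat_dvd_not_less by blast
    moreover have "of_nat (j - i) * x = s - t"
      using that by (simp add: of_nat_diff algebra_simps)
    ultimately show False
      using add_closed_of_nat_mult_cancel[OF S] add_closed_diff[OF S that(1,2)] x by metis
  qed
  have "inj_on (\<lambda>(s, i). s + of_nat i * x) (S \<times> {..<?p})"
  proof (rule inj_onI, clarify)
    fix s i t j assume "s \<in> S" "i < ?p" "t \<in> S" "j < ?p" "s + of_nat i * x = t + of_nat j * x"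
    then show "s = t \<and> i = j"
      using no_collision[of s t i j] no_collision[of t s j i] by (cases "i \<le> j") auto
  qed
  then show "card S' = ?p * card S"
    unfolding S'_def by (simp add: card_image card_cartesian_product)
qed

lemma card_UNIV_eq_CHAR_power_mult:
  fixes S :: "'a::{finite,field} set"
  assumes "add_closed S"
  shows "\<exists>k. card (UNIV :: 'a set) = CHAR('a) ^ k * card S"
  using assms
proof (induction "card (UNIV - S)" arbitrary: S rule: less_induct)
  case less
  show ?case
  proof (cases "S = UNIV")
    case False
    then obtain x where "x \<notin> S"
      by blast
    define S' where "S' = (\<lambda>(s, i). s + of_nat i * x) ` (S \<times> {..<CHAR('a)})"
    note S' = add_closed_extend[OF less.prems \<open>x \<notin> S\<close>, folded S'_def]
    have "card (UNIV - S') < card (UNIV - S)"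
      using S'(2) by (intro psubset_card_mono) auto
    then obtain k where "card (UNIV :: 'a set) = CHAR('a) ^ k * card S'"
      using less.hyps S'(1) by blast
    then have "card (UNIV :: 'a set) = CHAR('a) ^ Suc k * card S"
      using S'(3) by simp
    then show ?thesis
      by blast
  qed (intro exI[of _ 0], simp)
qed

lemma card_UNIV_eq_CHAR_power: "\<exists>k. card (UNIV :: 'a::{finite,field} set) = CHAR('a) ^ k"
  using card_UNIV_eq_CHAR_power_mult[of "{0::'a}"] by (simp add: add_closed_def)

section \<open>Conjugation in a field with q^2 elements\<close>

context
  fixes q :: nat
  assumes card_UNIV_eq_square: "card (UNIV :: 'a::{finite,field} set) = q ^ 2"
begin

lemma q_pos: "q > 0"
  using card_UNIV_eq_square finite_UNIV_card_ge_0[where ?'a = 'a] by (cases q) auto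

lemma power_q_add: "(x + y :: 'a) ^ q = x ^ q + y ^ q"
proof -
  have prime: "prime CHAR('a)"
    by (simp add: finite_imp_CHAR_pos prime_CHAR_semidom)
  obtain k where "card (UNIV :: 'a set) = CHAR('a) ^ k"
    using card_UNIV_eq_CHAR_power by blast
  then have "q dvd CHAR('a) ^ k"
    using card_UNIV_eq_square by (metis dvd_triv_left power2_eq_square)
  then obtain j where "q = CHAR('a) ^ j"
    using divides_primepow_nat[OF prime] by blast
  then show ?thesis
    by (intro freshmans_dream'[OF prime])
qed

lemma power_q_diff: "(x - y :: 'a) ^ q = x ^ q - y ^ q"
  using power_q_add[of "x - y" y] by (simp add: algebra_simps)

lemma power_q_uminus: "(- x :: 'a) ^ q = - (x ^ q)"
  using power_q_diff[of 0 x] q_pos by simp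

lemma power_q_power_q: "((x :: 'a) ^ q) ^ q = x"
  using power_card_eq_self[of x] card_UNIV_eq_square by (simp add: power2_eq_square flip: power_mult)

text \<open>T x = x^q - x is additive with kernel F and image in G = {y. y^q = -y}, and G embeds
  into F by dividing by a nonzero element of G; hence q^2 \<le> |F| |G| \<le> |F|^2.\<close>

lemma q_le_card_fixed_field: "q \<le> card {x::'a. x ^ q = x}"
proof -
  define F where "F = {x::'a. x ^ q = x}"
  define G where "G = {x::'a. x ^ q = - x}"
  define T where "T = (\<lambda>x::'a. x ^ q - x)"
  have T_diff: "T (x - y) = T x - T y" for x y
    unfolding T_def by (simp add: power_q_diff)
  have T_in_G: "T x \<in> G" for x
    unfolding G_def T_def by (simp add: power_q_diff power_q_power_q)
  define s where "s = inv_into UNIV T"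
  have T_s: "T (s (T x)) = T x" for x
    unfolding s_def by (meson f_inv_into_f rangeI)
  define \<phi> where "\<phi> = (\<lambda>x. (x - s (T x), T x))"
  have "inj \<phi>"
    by (rule injI) (auto simp: \<phi>_def)
  moreover have "T (x - s (T x)) = 0" for x
    by (simp add: T_diff T_s)
  then have "\<phi> ` UNIV \<subseteq> F \<times> G"
    using T_in_G by (auto simp: \<phi>_def F_def T_def)
  ultimately have "card (UNIV :: 'a set) \<le> card (F \<times> G)"
    by (intro card_inj_on_le) auto
  then have FG: "q * q \<le> card F * card G"
    using card_UNIV_eq_square by (simp add: power2_eq_square card_cartesian_product)
  have "card G \<le> card F"
  proof (cases "G \<subseteq> {0}")
    case True
    then have "card G \<le> 1"
      using card_mono[of "{0::'a}" G] by simp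
    moreover have "0 \<in> F"
      using q_pos by (simp add: F_def)
    then have "1 \<le> card F"
      by (simp add: Suc_le_eq card_gt_0_iff) blast
    ultimately show ?thesis
      by simp
  next
    case False
    then obtain y0 where y0: "y0 \<in> G" "y0 \<noteq> 0"
      by blast
    have "inj_on (\<lambda>y. y / y0) G" "(\<lambda>y. y / y0) ` G \<subseteq> F"
      using y0 by (auto intro: inj_onI simp: G_def F_def power_divide)
    then show ?thesis
      by (intro card_inj_on_le) auto
  qed
  then have "q * q \<le> card F * card F"
    using FG by (meson le_trans mult_le_mono2)
  then show ?thesis
    unfolding F_def by (metis power2_eq_square power2_le_imp_le zero_le)
qed

end

section \<open>Hermitian matrices and rank-one updates\<close>

lemma invertible_mat_iff_det:
  fixes A :: "'a::field mat"
  assumes A: "A \<in> carrier_mat n n"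
  shows "invertible_mat A \<longleftrightarrow> det A \<noteq> 0"
proof
  assume "invertible_mat A"
  then obtain B where AB: "A * B = 1\<^sub>m n" and BA: "B * A = 1\<^sub>m (dim_row B)"
    using A unfolding invertible_mat_def inverts_mat_def by auto
  have B: "B \<in> carrier_mat n n"
    using arg_cong[OF AB, of dim_col] arg_cong[OF BA, of dim_col] A by auto
  have "det A * det B = 1"
    using det_mult[OF A B] AB by simp
  then show "det A \<noteq> 0"
    by auto
next
  assume "det A \<noteq> 0"
  from det_non_zero_imp_unit[OF A this, of "()"]
  obtain B where "B \<in> carrier_mat n n" "B * A = 1\<^sub>m n" "A * B = 1\<^sub>m n"
    unfolding Units_def ring_mat_simps by auto
  then show "invertible_mat A"
    using A unfolding invertible_mat_def inverts_mat_def by auto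
qed

lemma hermitian_mat_iff:
  fixes A :: "'a::field mat"
  assumes "A \<in> carrier_mat n n"
  shows "hermitian_mat q A \<longleftrightarrow> (\<forall>i<n. \<forall>j<n. A $$ (j, i) ^ q = A $$ (i, j))"
  using assms unfolding hermitian_mat_def conj_transpose_def qbar_def mat_eq_iff by auto

lemma HGL_iff:
  fixes A :: "'a::field mat"
  shows "A \<in> HGL q n \<longleftrightarrow> A \<in> carrier_mat n n \<and> hermitian_mat q A \<and> det A \<noteq> 0"
  unfolding HGL_def using invertible_mat_iff_det by blast

lemma index_mult_mat_vec_sum:
  fixes M :: "'a::field mat"
  assumes "M \<in> carrier_mat n n" "v \<in> carrier_vec n" "a < n"
  shows "(M *\<^sub>v v) $ a = (\<Sum>b<n. M $$ (a, b) * v $ b)"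
  using assms by (simp add: scalar_prod_def lessThan_atLeast0)

lemma rank_one_update_kernel:
  fixes M :: "'a::field mat"
  assumes M: "M \<in> carrier_mat n n" and x: "x \<in> carrier_vec n"
    and kernel: "mat n n (\<lambda>(a, b). M $$ (a, b) + d * (f a * g b)) *\<^sub>v x = 0\<^sub>v n" and a: "a < n"
  shows "(M *\<^sub>v x) $ a = - (d * (\<Sum>b<n. g b * x $ b)) * f a"
proof -
  let ?X = "mat n n (\<lambda>(a, b). M $$ (a, b) + d * (f a * g b))"
  define s where "s = (\<Sum>b<n. g b * x $ b)"
  have "0 = (?X *\<^sub>v x) $ a"
    using kernel a by simp
  also have "\<dots> = (\<Sum>b<n. (M $$ (a, b) + d * (f a * g b)) * x $ b)"
    using index_mult_mat_vec_sum[OF mat_carrier[of n n "\<lambda>(a, b). M $$ (a, b) + d * (f a * g b)"] x a]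
      a by simp
  also have "\<dots> = (M *\<^sub>v x) $ a + d * f a * s"
    using index_mult_mat_vec_sum[OF M x a]
    unfolding s_def by (simp add: algebra_simps sum.distrib sum_distrib_left)
  finally have "(M *\<^sub>v x) $ a = - (d * s) * f a"
    by (simp add: algebra_simps eq_neg_iff_add_eq_0)
  then show ?thesis
    by (simp only: s_def)
qed

text \<open>The matrix determinant lemma, det (M + d f g^T) = det M (1 + d g^T M^-1 f), in the direction
  needed here; a kernel vector of M + d f g^T replaces the explicit inverse.\<close>

lemma singular_rank_one_updateD:
  fixes M :: "'a::field mat"
  assumes M: "M \<in> carrier_mat n n" "det M \<noteq> 0"
    and singular: "det (mat n n (\<lambda>(a, b). M $$ (a, b) + d * (f a * g b))) = 0"
  shows "\<exists>y \<in> carrier_vec n. M *\<^sub>v y = vec n f \<and> (\<Sum>b<n. g b * y $ b) * d = -1"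
proof -
  obtain x where x: "x \<in> carrier_vec n" "x \<noteq> 0\<^sub>v n"
    and kernel: "mat n n (\<lambda>(a, b). M $$ (a, b) + d * (f a * g b)) *\<^sub>v x = 0\<^sub>v n"
    using det_0_iff_vec_prod_zero_field[OF mat_carrier[of n n "\<lambda>(a, b). M $$ (a, b) + d * (f a * g b)"]]
      singular by blast
  define s where "s = (\<Sum>b<n. g b * x $ b)"
  note Mx = rank_one_update_kernel[OF M(1) x(1) kernel, folded s_def]
  have ds: "d * s \<noteq> 0"
  proof
    assume "d * s = 0"
    then have "M *\<^sub>v x = 0\<^sub>v n"
      using Mx M(1) x(1) by (intro eq_vecI) auto
    then show False
      using det_0_iff_vec_prod_zero_field[OF M(1)] M(2) x by blast
  qed
  define c where "c = - inverse (d * s)"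
  define y where "y = vec n (\<lambda>b. c * x $ b)"
  have y: "y \<in> carrier_vec n"
    by (simp add: y_def)
  have "M *\<^sub>v y = vec n f"
  proof (rule eq_vecI)
    fix a assume "a < dim_vec (vec n f)"
    then have a: "a < n"
      by simp
    have "(M *\<^sub>v y) $ a = (\<Sum>b<n. M $$ (a, b) * y $ b)"
      by (rule index_mult_mat_vec_sum[OF M(1) y a])
    also have "\<dots> = c * (\<Sum>b<n. M $$ (a, b) * x $ b)"
      unfolding y_def by (simp add: sum_distrib_left mult_ac)
    also have "\<dots> = c * (- (d * s) * f a)"
      using Mx[OF a] index_mult_mat_vec_sum[OF M(1) x(1) a] by simp
    also have "\<dots> = f a"
      unfolding c_def using ds by (simp add: field_simps)
    finally show "(M *\<^sub>v y) $ a = vec n f $ a"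
      using a by simp
  qed (use M(1) in simp)
  moreover have "(\<Sum>b<n. g b * y $ b) * d = -1"
  proof -
    have "(\<Sum>b<n. g b * y $ b) = c * s"
      unfolding y_def s_def by (simp add: sum_distrib_left mult_ac)
    then show ?thesis
      unfolding c_def using ds by (simp add: field_simps)
  qed
  ultimately show ?thesis
    using y by blast
qed

lemma singular_rank_one_update_unique:
  fixes M :: "'a::field mat"
  assumes M: "M \<in> carrier_mat n n" "det M \<noteq> 0"
    and "det (mat n n (\<lambda>(a, b). M $$ (a, b) + d * (f a * g b))) = 0"
    and "det (mat n n (\<lambda>(a, b). M $$ (a, b) + d' * (f a * g b))) = 0"
  shows "d = d'"
proof -
  obtain y1 y2 where y: "y1 \<in> carrier_vec n" "y2 \<in> carrier_vec n"
    "M *\<^sub>v y1 = vec n f" "M *\<^sub>v y2 = vec n f"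
    "(\<Sum>b<n. g b * y1 $ b) * d = -1" "(\<Sum>b<n. g b * y2 $ b) * d' = -1"
    using singular_rank_one_updateD[OF M assms(3)] singular_rank_one_updateD[OF M assms(4)] by blast
  have "M *\<^sub>v (y1 - y2) = 0\<^sub>v n"
    using mult_minus_distrib_mat_vec[OF M(1) y(1,2)] y(3,4) by simp
  moreover have "y1 - y2 \<in> carrier_vec n"
    using y(1,2) by simp
  ultimately have "y1 - y2 = 0\<^sub>v n"
    using det_0_iff_vec_prod_zero_field[OF M(1)] M(2) by blast
  have "y1 = y2"
  proof (rule eq_vecI)
    fix i assume i: "i < dim_vec y2"
    then have "(y1 - y2) $ i = 0"
      using \<open>y1 - y2 = 0\<^sub>v n\<close> y(2) by simp
    then show "y1 $ i = y2 $ i"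
      using i y(1,2) by simp
  qed (use y(1,2) in simp)
  then have "(\<Sum>b<n. g b * y1 $ b) * d = (\<Sum>b<n. g b * y1 $ b) * d'"
    and "(\<Sum>b<n. g b * y1 $ b) \<noteq> 0"
    using y(5,6) by auto
  then show "d = d'"
    by simp
qed

lemma rank_eq_1_if_product_entries:
  fixes M :: "'a::field mat"
  assumes M: "M \<in> carrier_mat n n"
    and entries: "\<And>a b. a < n \<Longrightarrow> b < n \<Longrightarrow> M $$ (a, b) = f a * g b"
    and nonzero: "a0 < n" "b0 < n" "M $$ (a0, b0) \<noteq> 0"
  shows "vec_space.rank n M = 1"
proof (rule antisym)
  show "vec_space.rank n M \<le> 1"
    by (rule vec_space.rank_le_1_product_entries[OF M, of f g]) (use M entries in auto)
  have rows: "{i. i < n \<and> i \<in> {a0}} = {a0}" and cols: "{j. j < n \<and> j \<in> {b0}} = {b0}"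
    using nonzero by auto
  have S: "submatrix M {a0} {b0} \<in> carrier_mat 1 1"
    unfolding submatrix_def using M rows cols by simp
  have "det (submatrix M {a0} {b0}) = M $$ (a0, b0)"
    unfolding det_single[OF S] unfolding submatrix_def using M rows cols by (simp add: Least_equality)
  then show "1 \<le> vec_space.rank n M"
    using vec_space.rank_gt_minor[OF M, of "{a0}" "{b0}"] cols nonzero(3) by simp
qed

definition rank_one_update :: "nat \<Rightarrow> nat \<Rightarrow> 'a::field mat \<Rightarrow> 'a \<Rightarrow> (nat \<Rightarrow> 'a) \<Rightarrow> 'a mat" where
  "rank_one_update q n A c f = mat n n (\<lambda>(i, j). A $$ (i, j) + c * (f i * f j ^ q))"

lemma rank_one_update_carrier [simp]: "rank_one_update q n A c f \<in> carrier_mat n n"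
  by (simp add: rank_one_update_def)

lemma rank_one_update_dim [simp]:
  "dim_row (rank_one_update q n A c f) = n" "dim_col (rank_one_update q n A c f) = n"
  by (simp_all add: rank_one_update_def)

lemma rank_one_update_index [simp]:
  "i < n \<Longrightarrow> j < n \<Longrightarrow> rank_one_update q n A c f $$ (i, j) = A $$ (i, j) + c * (f i * f j ^ q)"
  by (simp add: rank_one_update_def)

lemma rank_one_update_zero: "A \<in> carrier_mat n n \<Longrightarrow> rank_one_update q n A 0 f = A"
  by (intro eq_matI) auto

lemma rank_one_update_cancel:
  "A \<in> carrier_mat n n \<Longrightarrow> rank_one_update q n (rank_one_update q n A (- c) f) c f = A"
  by (intro eq_matI) auto

lemma HGL_adj_rank_one_update:
  fixes A :: "'a::field mat"
  assumes A: "A \<in> HGL q n" and A': "rank_one_update q n A c f \<in> HGL q n"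
    and "c \<noteq> 0" "a < n" "f a \<noteq> 0"
  shows "HGL_adj q n A (rank_one_update q n A c f)" "HGL_adj q n (rank_one_update q n A c f) A"
proof -
  have Ac: "A \<in> carrier_mat n n"
    using A by (simp add: HGL_iff)
  have "vec_space.rank n (A - rank_one_update q n A c f) = 1"
    by (rule rank_eq_1_if_product_entries[of _ n "\<lambda>i. - c * f i" "\<lambda>j. f j ^ q" a a])
      (use Ac assms in auto)
  then show "HGL_adj q n A (rank_one_update q n A c f)"
    unfolding HGL_adj_def using A A' by simp
  have "vec_space.rank n (rank_one_update q n A c f - A) = 1"
    by (rule rank_eq_1_if_product_entries[of _ n "\<lambda>i. c * f i" "\<lambda>j. f j ^ q" a a])
      (use Ac assms in auto)
  then show "HGL_adj q n (rank_one_update q n A c f) A"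
    unfolding HGL_adj_def using A A' by simp
qed

lemma rtranclp_HGL_adj_rank_one_update:
  fixes A :: "'a::field mat"
  assumes "A \<in> HGL q n" "rank_one_update q n A c f \<in> HGL q n" "a < n" "f a \<noteq> 0"
  shows "(HGL_adj q n)\<^sup>*\<^sup>* A (rank_one_update q n A c f)"
    "(HGL_adj q n)\<^sup>*\<^sup>* (rank_one_update q n A c f) A"
proof -
  have "rank_one_update q n A c f = A \<or>
      HGL_adj q n A (rank_one_update q n A c f) \<and> HGL_adj q n (rank_one_update q n A c f) A"
    using HGL_adj_rank_one_update[OF assms(1,2) _ assms(3,4)] assms(1)
    by (cases "c = 0") (simp_all add: HGL_iff rank_one_update_zero)
  then show "(HGL_adj q n)\<^sup>*\<^sup>* A (rank_one_update q n A c f)"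
    "(HGL_adj q n)\<^sup>*\<^sup>* (rank_one_update q n A c f) A"
    by (metis r_into_rtranclp rtranclp.rtrancl_refl)+
qed

definition HGL_difference_connected :: "nat \<Rightarrow> nat \<Rightarrow> 'a::field mat \<Rightarrow> bool" where
  "HGL_difference_connected q n H \<longleftrightarrow>
    (\<forall>A\<in>HGL q n. \<forall>B\<in>HGL q n. B - A = H \<longrightarrow> (HGL_adj q n)\<^sup>*\<^sup>* A B)"

lemma HGL_difference_connected_zero: "HGL_difference_connected q n (0\<^sub>m n n :: 'a::field mat)"
  unfolding HGL_difference_connected_def
proof (intro ballI impI)
  fix A B :: "'a mat" assume "A \<in> HGL q n" "B \<in> HGL q n" and BA: "B - A = 0\<^sub>m n n"
  then have carrier: "A \<in> carrier_mat n n" "B \<in> carrier_mat n n"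
    by (simp_all add: HGL_iff)
  have "B = A"
  proof (rule eq_matI)
    fix i j assume "i < dim_row A" "j < dim_col A"
    then have "(B - A) $$ (i, j) = 0"
      using BA carrier by simp
    then show "B $$ (i, j) = A $$ (i, j)"
      using \<open>i < dim_row A\<close> \<open>j < dim_col A\<close> by simp
  qed (use carrier in auto)
  then show "(HGL_adj q n)\<^sup>*\<^sup>* A B"
    by simp
qed

definition offdiag_support :: "nat \<Rightarrow> 'a::zero mat \<Rightarrow> (nat \<times> nat) set" where
  "offdiag_support n H = {(i, j). i < n \<and> j < n \<and> i \<noteq> j \<and> H $$ (i, j) \<noteq> 0}"

definition diag_support :: "nat \<Rightarrow> 'a::zero mat \<Rightarrow> nat set" where
  "diag_support n H = {i. i < n \<and> H $$ (i, i) \<noteq> 0}"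

lemma finite_offdiag_support: "finite (offdiag_support n H)"
  by (rule finite_subset[of _ "{..<n} \<times> {..<n}"]) (auto simp: offdiag_support_def)

lemma finite_diag_support: "finite (diag_support n H)"
  by (rule finite_subset[of _ "{..<n}"]) (auto simp: diag_support_def)

lemma card_diag_support_le: "card (diag_support n H) \<le> n"
  using card_mono[of "{..<n}" "diag_support n H"] by (auto simp: diag_support_def)

text \<open>Off-diagonal entries weigh more than all diagonal ones together: clearing an off-diagonal
  pair may disturb the diagonal, but removing a diagonal entry leaves the off-diagonal support
  untouched.\<close>

definition support_weight :: "nat \<Rightarrow> 'a::zero mat \<Rightarrow> nat" where
  "support_weight n H = (n + 1) * card (offdiag_support n H) + card (diag_support n H)"

lemma support_weight_less_if_offdiag_support_psubset:
  assumes "offdiag_support n H' \<subset> offdiag_support n H"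
  shows "support_weight n H' < support_weight n H"
proof -
  have "Suc (card (offdiag_support n H')) \<le> card (offdiag_support n H)"
    using assms by (simp add: Suc_le_eq finite_offdiag_support psubset_card_mono)
  then have "(n + 1) * Suc (card (offdiag_support n H')) \<le> (n + 1) * card (offdiag_support n H)"
    by (rule mult_le_mono2)
  then show ?thesis
    using card_diag_support_le[of n H'] unfolding support_weight_def mult_Suc_right by linarith
qed

lemma eq_0_if_supports_empty:
  assumes "H \<in> carrier_mat n n" "offdiag_support n H = {}" "diag_support n H = {}"
  shows "H = 0\<^sub>m n n"
proof (rule eq_matI)
  fix i j assume "i < dim_row (0\<^sub>m n n :: 'a mat)" "j < dim_col (0\<^sub>m n n :: 'a mat)"
  then show "H $$ (i, j) = 0\<^sub>m n n $$ (i, j)"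
    using assms by (cases "i = j") (auto simp: offdiag_support_def diag_support_def)
qed (use assms(1) in auto)

context
  fixes q :: nat
  assumes card_UNIV_eq_square: "card (UNIV :: 'a::{finite,field} set) = q ^ 2"
begin

lemma rank_one_update_hermitian:
  fixes A :: "'a mat"
  assumes A: "A \<in> carrier_mat n n" "hermitian_mat q A" and c: "c ^ q = c"
  shows "hermitian_mat q (rank_one_update q n A c f)"
  using A c unfolding hermitian_mat_iff[OF A(1)] hermitian_mat_iff[OF rank_one_update_carrier]
  by (simp add: power_q_add[OF card_UNIV_eq_square] power_mult_distrib
      power_q_power_q[OF card_UNIV_eq_square] mult_ac)

lemma hermitian_mat_diff:
  fixes A B :: "'a mat"
  assumes "A \<in> carrier_mat n n" "B \<in> carrier_mat n n" "hermitian_mat q A" "hermitian_mat q B"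
  shows "hermitian_mat q (B - A)"
  using assms unfolding hermitian_mat_iff[OF minus_carrier_mat[OF assms(1)]]
  by (simp add: hermitian_mat_iff power_q_diff[OF card_UNIV_eq_square])

lemma obtain_rank_one_updates_in_HGL:
  fixes A B :: "'a mat"
  assumes "3 \<le> q" and A: "A \<in> HGL q n" and B: "B \<in> HGL q n" and c: "c ^ q = c"
  obtains d where "d ^ q = d" "rank_one_update q n A d f \<in> HGL q n"
    "rank_one_update q n B (d - c) f \<in> HGL q n"
proof -
  have A': "A \<in> carrier_mat n n" "hermitian_mat q A" "det A \<noteq> 0"
    and B': "B \<in> carrier_mat n n" "hermitian_mat q B" "det B \<noteq> 0"
    using A B by (simp_all add: HGL_iff)
  define sing_A where "sing_A = {d. det (rank_one_update q n A d f) = 0}"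
  define sing_B where "sing_B = {d. det (rank_one_update q n B (d - c) f) = 0}"
  have "d1 = d2" if "d1 \<in> sing_A" "d2 \<in> sing_A" for d1 d2
    using that singular_rank_one_update_unique[OF A'(1,3),
        where d = d1 and d' = d2 and f = f and g = "\<lambda>j. f j ^ q"]
    unfolding sing_A_def rank_one_update_def by simp
  then have "card sing_A \<le> 1"
    using card_le_Suc0_iff_eq[of sing_A] by auto
  have "d1 - c = d2 - c" if "d1 \<in> sing_B" "d2 \<in> sing_B" for d1 d2
    using that singular_rank_one_update_unique[OF B'(1,3),
        where d = "d1 - c" and d' = "d2 - c" and f = f and g = "\<lambda>j. f j ^ q"]
    unfolding sing_B_def rank_one_update_def by simp
  then have "card sing_B \<le> 1"
    using card_le_Suc0_iff_eq[of sing_B] by auto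
  moreover note \<open>card sing_A \<le> 1\<close>
  moreover have "3 \<le> card {d::'a. d ^ q = d}"
    using q_le_card_fixed_field[OF card_UNIV_eq_square] assms(1) by linarith
  ultimately have "\<not> {d. d ^ q = d} \<subseteq> sing_A \<union> sing_B"
    using card_mono[of "sing_A \<union> sing_B" "{d. d ^ q = d}"] card_Un_le[of sing_A sing_B] by auto
  then obtain d where d: "d ^ q = d" "d \<notin> sing_A" "d \<notin> sing_B"
    by blast
  have "(d - c) ^ q = d - c"
    using d(1) c by (simp add: power_q_diff[OF card_UNIV_eq_square])
  then have "rank_one_update q n A d f \<in> HGL q n" "rank_one_update q n B (d - c) f \<in> HGL q n"
    using d rank_one_update_hermitian[OF A'(1,2) d(1)] rank_one_update_hermitian[OF B'(1,2)]
    by (simp_all add: HGL_iff sing_A_def sing_B_def)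
  with d(1) show thesis
    by (rule that)
qed

lemma HGL_difference_connected_rank_one_update:
  fixes H :: "'a mat"
  assumes "3 \<le> q" and H: "H \<in> carrier_mat n n" "HGL_difference_connected q n H"
    and c: "c ^ q = c" and f: "a < n" "f a \<noteq> 0"
  shows "HGL_difference_connected q n (rank_one_update q n H c f)"
  unfolding HGL_difference_connected_def
proof (intro ballI impI)
  fix A B assume A: "A \<in> HGL q n" and B: "B \<in> HGL q n" and BA: "B - A = rank_one_update q n H c f"
  obtain d where d: "d ^ q = d" "rank_one_update q n A d f \<in> HGL q n"
    "rank_one_update q n B (d - c) f \<in> HGL q n"
    using obtain_rank_one_updates_in_HGL[OF assms(1) A B c] by blast
  have "rank_one_update q n B (d - c) f - rank_one_update q n A d f = H"
  proof (rule eq_matI)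
    fix i j assume "i < dim_row H" "j < dim_col H"
    then have ij: "i < n" "j < n"
      using H(1) by auto
    have "A \<in> carrier_mat n n"
      using A by (simp add: HGL_iff)
    then have "B $$ (i, j) - A $$ (i, j) = H $$ (i, j) + c * (f i * f j ^ q)"
      using arg_cong[OF BA, of "\<lambda>M. M $$ (i, j)"] ij by auto
    then show "(rank_one_update q n B (d - c) f - rank_one_update q n A d f) $$ (i, j) = H $$ (i, j)"
      using ij by (simp add: algebra_simps)
  qed (use H(1) in auto)
  then have "(HGL_adj q n)\<^sup>*\<^sup>* (rank_one_update q n A d f) (rank_one_update q n B (d - c) f)"
    using H(2) d(2,3) unfolding HGL_difference_connected_def by blast
  then show "(HGL_adj q n)\<^sup>*\<^sup>* A B"
    using rtranclp_HGL_adj_rank_one_update(1)[OF A d(2) f]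
      rtranclp_HGL_adj_rank_one_update(2)[OF B d(3) f] by (meson rtranclp_trans)
qed

lemma support_weight_rank_one_update_diag_less:
  fixes H :: "'a mat"
  assumes "i \<in> diag_support n H"
  defines "e \<equiv> \<lambda>k. if k = i then 1 else 0"
  shows "support_weight n (rank_one_update q n H (- H $$ (i, i)) e) < support_weight n H"
proof -
  have e: "e a * e b ^ q = (if a = i \<and> b = i then 1 else 0)" for a b
    using q_pos[OF card_UNIV_eq_square] by (simp add: e_def)
  have "offdiag_support n (rank_one_update q n H (- H $$ (i, i)) e) = offdiag_support n H"
    by (auto simp: offdiag_support_def e split: if_splits)
  moreover have "diag_support n (rank_one_update q n H (- H $$ (i, i)) e) = diag_support n H - {i}"
    using assms(1) by (auto simp: diag_support_def e split: if_splits)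
  moreover have "card (diag_support n H - {i}) < card (diag_support n H)"
    by (rule card_Diff1_less[OF finite_diag_support assms(1)])
  ultimately show ?thesis
    by (simp add: support_weight_def)
qed

lemma offdiag_support_rank_one_update_pair:
  fixes H :: "'a mat"
  assumes H: "H \<in> carrier_mat n n" "hermitian_mat q H" and ij: "(i, j) \<in> offdiag_support n H"
  defines "f \<equiv> \<lambda>k. if k = i then 1 else if k = j then H $$ (j, i) else 0"
  shows "offdiag_support n (rank_one_update q n H (- 1) f) \<subset> offdiag_support n H"
proof -
  have ij': "i < n" "j < n" "i \<noteq> j"
    using ij by (auto simp: offdiag_support_def)
  have conj: "H $$ (j, i) ^ q = H $$ (i, j)"
    using H ij' unfolding hermitian_mat_iff[OF H(1)] by blast
  have "offdiag_support n (rank_one_update q n H (- 1) f) \<subseteq> offdiag_support n H - {(i, j)}"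
  proof
    fix x assume "x \<in> offdiag_support n (rank_one_update q n H (- 1) f)"
    then obtain a b where x: "x = (a, b)" "a < n" "b < n" "a \<noteq> b"
      and nz: "rank_one_update q n H (- 1) f $$ (a, b) \<noteq> 0"
      unfolding offdiag_support_def by blast
    show "x \<in> offdiag_support n H - {(i, j)}"
    proof (cases "{a, b} = {i, j}")
      case True
      then have "(a = i \<and> b = j) \<or> (a = j \<and> b = i)"
        using x(4) by (auto simp: doubleton_eq_iff)
      then have "rank_one_update q n H (- 1) f $$ (a, b) = 0"
        using x(2,3) conj ij'(3) by (auto simp: f_def)
      then show ?thesis
        using nz by contradiction
    next
      case False
      then have "f a * f b ^ q = 0"
        using x(4) q_pos[OF card_UNIV_eq_square] by (auto simp: f_def)
      then show ?thesis
        using x nz False by (auto simp: offdiag_support_def)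
    qed
  qed
  then show ?thesis
    using ij by blast
qed

lemma hermitian_HGL_difference_connected:
  fixes H :: "'a mat"
  assumes "3 \<le> q" "H \<in> carrier_mat n n" "hermitian_mat q H"
  shows "HGL_difference_connected q n H"
  using assms(2,3)
proof (induction "support_weight n H" arbitrary: H rule: less_induct)
  case less
  have peel: "HGL_difference_connected q n H"
    if c: "c ^ q = c" and f: "a < n" "f a \<noteq> 0"
      and lt: "support_weight n (rank_one_update q n H (- c) f) < support_weight n H"
    for c f a
  proof -
    have "hermitian_mat q (rank_one_update q n H (- c) f)"
      using rank_one_update_hermitian[OF less.prems] c by (simp add: power_q_uminus[OF card_UNIV_eq_square])
    then have "HGL_difference_connected q n (rank_one_update q n H (- c) f)"
      using less.hyps[OF lt] by simp
    from HGL_difference_connected_rank_one_update[where f = f and a = a,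
        OF assms(1) rank_one_update_carrier this c f]
    show ?thesis
      using rank_one_update_cancel[OF less.prems(1)] by simp
  qed
  consider (diag) i where "i \<in> diag_support n H" | (offdiag) i j where "(i, j) \<in> offdiag_support n H"
    | (zero) "H = 0\<^sub>m n n"
    using eq_0_if_supports_empty[OF less.prems(1)] by fast
  then show ?case
  proof cases
    case diag
    then have "H $$ (i, i) ^ q = H $$ (i, i)" "i < n"
      using less.prems unfolding hermitian_mat_iff[OF less.prems(1)] by (auto simp: diag_support_def)
    then show ?thesis
      using peel[where c = "H $$ (i, i)" and f = "\<lambda>k. if k = i then 1 else 0" and a = i]
        support_weight_rank_one_update_diag_less[OF diag] by simp
  next
    case offdiag
    then have "i < n"
      by (simp add: offdiag_support_def)
    then show ?thesis
      using peel[where c = 1 and f = "\<lambda>k. if k = i then 1 else if k = j then H $$ (j, i) else 0" and a = i]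
        support_weight_less_if_offdiag_support_psubset[OF
          offdiag_support_rank_one_update_pair[OF less.prems offdiag]] by simp
  next
    case zero
    then show ?thesis
      by (simp add: HGL_difference_connected_zero)
  qed
qed

end

theorem lemma2p5:
  fixes q n :: nat
  assumes "card (UNIV :: 'a set) = q ^ 2"
    and "q \<ge> 3"
    and "n \<ge> 2"
  shows "\<forall>A \<in> (HGL q n :: 'a::{finite,field} mat set). \<forall>B \<in> HGL q n. (HGL_adj q n)\<^sup>*\<^sup>* A B"
proof (intro ballI)
  fix A B :: "'a mat" assume A: "A \<in> HGL q n" and B: "B \<in> HGL q n"
  then have "B - A \<in> carrier_mat n n" "hermitian_mat q (B - A)"
    using hermitian_mat_diff[OF assms(1)] by (auto simp: HGL_iff)
  then have "HGL_difference_connected q n (B - A)"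
    by (rule hermitian_HGL_difference_connected[OF assms(1,2)])
  then show "(HGL_adj q n)\<^sup>*\<^sup>* A B"
    using A B by (simp add: HGL_difference_connected_def)
qed

end
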